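(* Let $(H,G,t,\Phi)$ be a crossed module of Lie groups with associated crossed module of Lie algebras $(\mathfrak{h},\mathfrak{g},\mathrm{d}t,\phi)$. If $(\mathcal{B}_1,\mathcal{B}_0)$ is a Rota-Baxter operator on $(H,G,t,\Phi)$, then $(B_1,B_0)$, where $B_1=(\mathcal{B}_1)_{*e_H}$ and $B_0=(\mathcal{B}_0)_{*e_G}$, is a Rota-Baxter operator on $(\mathfrak{h},\mathfrak{g},\mathrm{d}t,\phi)$.
   Context: A crossed module of Lie groups is a quadruple $(H,G,t,\Phi)$ where $H,G$ are Lie groups, $t:H\to G$ is a Lie group homomorphism and $\Phi:G\to\mathrm{Aut}(H)$ is a smooth action by automorphisms such that $\Phi(t(p))q=pqp^{-1}$ and $t(\Phi(a)p)=a\,t(p)\,a^{-1}$. Its associated crossed module of Lie algebras $(\mathfrak{h},\mathfrak{g},\mathrm{d}t,\phi)$ has $\mathfrak{h},\mathfrak{g}$ the Lie algebras of $H,G$, $\mathrm{d}t=t_{*e}$, $\phi(x)u=\frac{d}{ds}\frac{d}{dr}\big|_{s=r=0}\Phi(\exp(sx))\exp(ru)$. A Rota-Baxter operator on a Lie group $G$ is a smooth map $\mathcal{B}:G\to G$ with $\mathcal{B}(a)\mathcal{B}(b)=\mathcal{B}(a\mathcal{B}(a)b\mathcal{B}(a)^{-1})$. A Rota-Baxter operator on $(H,G,t,\Phi)$ is a pair $(\mathcal{B}_1,\mathcal{B}_0)$ of smooth maps such that (i) $\mathcal{B}_1,\mathcal{B}_0$ are Rota-Baxter operators on $H,G$;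 (ii) $t\circ\mathcal{B}_1=\mathcal{B}_0\circ t$; (iii) $\Phi(\mathcal{B}_0(a))\mathcal{B}_1(p)=\mathcal{B}_1\big(\Phi(a\mathcal{B}_0(a))(p\mathcal{B}_1(p))\cdot\Phi(\mathcal{B}_0(a))\mathcal{B}_1(p)^{-1}\big)$ for all $a\in G,p\in H$. A Rota-Baxter operator (of weight 1) on a Lie algebra $\mathfrak{g}$ is a linear map $B$ with $[B(x),B(y)]=B([B(x),y]+[x,B(y)]+[x,y])$. A Rota-Baxter operator on a crossed module of Lie algebras $(\mathfrak{h},\mathfrak{g},\mathrm{d}t,\phi)$ is a pair $(B_1,B_0)$ of linear maps such that (i) $B_1,B_0$ are Rota-Baxter operators on $\mathfrak{h},\mathfrak{g}$; (ii) $\mathrm{d}t\circ B_1=B_0\circ\mathrm{d}t$; (iii) $\phi(B_0(x))B_1(u)=B_1\big(\phi(x)B_1(u)+\phi(B_0(x))u+\phi(x)u\big)$. *)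

theory Defs
  imports "HOL-Analysis.Analysis" "HOL-Algebra.Group"
begin

fun Ck_on :: "nat \<Rightarrow> 'a::real_normed_vector set \<Rightarrow> ('a \<Rightarrow> 'b::real_normed_vector) \<Rightarrow> bool" where
  "Ck_on 0 S f = continuous_on S f"
| "Ck_on (Suc k) S f =
     ((\<forall>x\<in>S. f differentiable (at x)) \<and> (\<forall>v. Ck_on k S (\<lambda>x. frechet_derivative f (at x) v)))"

definition smooth_on :: "'a::real_normed_vector set \<Rightarrow> ('a \<Rightarrow> 'b::real_normed_vector) \<Rightarrow> bool" where
  "smooth_on S f \<longleftrightarrow> open S \<and> (\<forall>k. Ck_on k S f)"

definition is_chart :: "('m::topological_space set \<times> ('m \<Rightarrow> 'e::euclidean_space)) \<Rightarrow> bool" where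
  "is_chart Uc \<longleftrightarrow> (case Uc of (U, c) \<Rightarrow>
      open U \<and> open (c ` U) \<and> homeomorphism U (c ` U) c (inv_into U c))"

definition smooth_atlas :: "('m::topological_space set \<times> ('m \<Rightarrow> 'e::euclidean_space)) set \<Rightarrow> bool" where
  "smooth_atlas A \<longleftrightarrow>
     (\<forall>Uc\<in>A. is_chart Uc) \<and> \<Union>(fst ` A) = UNIV \<and>
     (\<forall>(U, c)\<in>A. \<forall>(V, d)\<in>A. smooth_on (c ` (U \<inter> V)) (d \<circ> inv_into U c))"

definition smooth_map ::
  "('m::topological_space set \<times> ('m \<Rightarrow> 'e::euclidean_space)) set \<Rightarrow>
   ('n::topological_space set \<times> ('n \<Rightarrow> 'f::euclidean_space)) set \<Rightarrow> ('m \<Rightarrow> 'n) \<Rightarrow> bool" where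
  "smooth_map A A' f \<longleftrightarrow> continuous_on UNIV f \<and>
     (\<forall>(U, c)\<in>A. \<forall>(V, d)\<in>A'. smooth_on (c ` (U \<inter> f -` V)) (d \<circ> f \<circ> inv_into U c))"

definition prod_atlas ::
  "('m set \<times> ('m \<Rightarrow> 'e)) set \<Rightarrow> ('n set \<times> ('n \<Rightarrow> 'f)) set \<Rightarrow>
   (('m \<times> 'n) set \<times> ('m \<times> 'n \<Rightarrow> 'e \<times> 'f)) set" where
  "prod_atlas A B = {(U \<times> V, \<lambda>(x, y). (c x, d y)) | U c V d. (U, c) \<in> A \<and> (V, d) \<in> B}"

definition lie_group ::
  "('g::{t2_space, second_countable_topology}) monoid \<Rightarrow> ('g set \<times> ('g \<Rightarrow> 'e::euclidean_space)) set \<Rightarrow> bool" where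
  "lie_group G A \<longleftrightarrow> group G \<and> carrier G = UNIV \<and> smooth_atlas A \<and>
     smooth_map (prod_atlas A A) A (\<lambda>(x, y). x \<otimes>\<^bsub>G\<^esub> y) \<and>
     smooth_map A A (\<lambda>x. inv\<^bsub>G\<^esub> x)"

definition crossed_module ::
  "('h::{t2_space, second_countable_topology}) monoid \<Rightarrow> ('h set \<times> ('h \<Rightarrow> 'eh::euclidean_space)) set \<Rightarrow>
   ('g::{t2_space, second_countable_topology}) monoid \<Rightarrow> ('g set \<times> ('g \<Rightarrow> 'eg::euclidean_space)) set \<Rightarrow>
   ('h \<Rightarrow> 'g) \<Rightarrow> ('g \<Rightarrow> 'h \<Rightarrow> 'h) \<Rightarrow> bool" where
  "crossed_module H AH G AG t \<Phi> \<longleftrightarrow>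
     lie_group H AH \<and> lie_group G AG \<and>
     t \<in> hom H G \<and> smooth_map AH AG t \<and>
     (\<forall>a. \<Phi> a \<in> iso H H) \<and>
     \<Phi> \<one>\<^bsub>G\<^esub> = id \<and> (\<forall>a b. \<Phi> (a \<otimes>\<^bsub>G\<^esub> b) = \<Phi> a \<circ> \<Phi> b) \<and>
     smooth_map (prod_atlas AG AH) AH (\<lambda>(a, p). \<Phi> a p) \<and>
     (\<forall>p q. \<Phi> (t p) q = p \<otimes>\<^bsub>H\<^esub> q \<otimes>\<^bsub>H\<^esub> inv\<^bsub>H\<^esub> p) \<and>
     (\<forall>a p. t (\<Phi> a p) = a \<otimes>\<^bsub>G\<^esub> t p \<otimes>\<^bsub>G\<^esub> inv\<^bsub>G\<^esub> a)"

definition rb_group ::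
  "('g::{t2_space, second_countable_topology}) monoid \<Rightarrow> ('g set \<times> ('g \<Rightarrow> 'e::euclidean_space)) set \<Rightarrow>
   ('g \<Rightarrow> 'g) \<Rightarrow> bool" where
  "rb_group G A \<B> \<longleftrightarrow> smooth_map A A \<B> \<and>
     (\<forall>a b. \<B> a \<otimes>\<^bsub>G\<^esub> \<B> b = \<B> (a \<otimes>\<^bsub>G\<^esub> \<B> a \<otimes>\<^bsub>G\<^esub> b \<otimes>\<^bsub>G\<^esub> inv\<^bsub>G\<^esub> (\<B> a)))"

definition rb_crossed_module ::
  "('h::{t2_space, second_countable_topology}) monoid \<Rightarrow> ('h set \<times> ('h \<Rightarrow> 'eh::euclidean_space)) set \<Rightarrow>
   ('g::{t2_space, second_countable_topology}) monoid \<Rightarrow> ('g set \<times> ('g \<Rightarrow> 'eg::euclidean_space)) set \<Rightarrow>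
   ('h \<Rightarrow> 'g) \<Rightarrow> ('g \<Rightarrow> 'h \<Rightarrow> 'h) \<Rightarrow> ('h \<Rightarrow> 'h) \<Rightarrow> ('g \<Rightarrow> 'g) \<Rightarrow> bool" where
  "rb_crossed_module H AH G AG t \<Phi> \<B>1 \<B>0 \<longleftrightarrow>
     rb_group H AH \<B>1 \<and> rb_group G AG \<B>0 \<and> t \<circ> \<B>1 = \<B>0 \<circ> t \<and>
     (\<forall>a p. \<Phi> (\<B>0 a) (\<B>1 p) =
        \<B>1 (\<Phi> (a \<otimes>\<^bsub>G\<^esub> \<B>0 a) (p \<otimes>\<^bsub>H\<^esub> \<B>1 p) \<otimes>\<^bsub>H\<^esub> \<Phi> (\<B>0 a) (inv\<^bsub>H\<^esub> (\<B>1 p))))"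

text \<open>The tangent space at the identity is identified with the model space of a chart (U, c)
  with e in U; x corresponds to the velocity at 0 of the curve s \<mapsto> c^{-1}(c e + s x).\<close>
definition chart_curve :: "'m set \<Rightarrow> ('m \<Rightarrow> 'e::real_vector) \<Rightarrow> 'm \<Rightarrow> 'e \<Rightarrow> real \<Rightarrow> 'm" where
  "chart_curve U c e x = (\<lambda>s. inv_into U c (c e + s *\<^sub>R x))"

definition mixed2 :: "(real \<Rightarrow> real \<Rightarrow> 'e::real_normed_vector) \<Rightarrow> 'e" where
  "mixed2 F = vector_derivative (\<lambda>s. vector_derivative (\<lambda>r. F s r) (at 0)) (at 0)"

definition lie_bracket :: "'g monoid \<Rightarrow> 'g set \<Rightarrow> ('g \<Rightarrow> 'e::euclidean_space) \<Rightarrow> 'e \<Rightarrow> 'e \<Rightarrow> 'e" where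
  "lie_bracket G U c x y = mixed2 (\<lambda>s r.
     c (chart_curve U c \<one>\<^bsub>G\<^esub> x s \<otimes>\<^bsub>G\<^esub> chart_curve U c \<one>\<^bsub>G\<^esub> y r \<otimes>\<^bsub>G\<^esub>
        inv\<^bsub>G\<^esub> (chart_curve U c \<one>\<^bsub>G\<^esub> x s)))"

definition lie_diff :: "'m set \<Rightarrow> ('m \<Rightarrow> 'e::euclidean_space) \<Rightarrow> 'm \<Rightarrow> ('m \<Rightarrow> 'n) \<Rightarrow> ('n \<Rightarrow> 'f::euclidean_space)
     \<Rightarrow> 'e \<Rightarrow> 'f" where
  "lie_diff U c e f d = frechet_derivative (d \<circ> f \<circ> inv_into U c) (at (c e))"

definition lie_action ::
  "'g monoid \<Rightarrow> 'g set \<Rightarrow> ('g \<Rightarrow> 'eg::euclidean_space) \<Rightarrow>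
   'h monoid \<Rightarrow> 'h set \<Rightarrow> ('h \<Rightarrow> 'eh::euclidean_space) \<Rightarrow> ('g \<Rightarrow> 'h \<Rightarrow> 'h) \<Rightarrow> 'eg \<Rightarrow> 'eh \<Rightarrow> 'eh" where
  "lie_action G UG cG H UH cH \<Phi> x u = mixed2 (\<lambda>s r.
     cH (\<Phi> (chart_curve UG cG \<one>\<^bsub>G\<^esub> x s) (chart_curve UH cH \<one>\<^bsub>H\<^esub> u r)))"

definition rb_lie :: "('e::real_vector \<Rightarrow> 'e \<Rightarrow> 'e) \<Rightarrow> ('e \<Rightarrow> 'e) \<Rightarrow> bool" where
  "rb_lie br B \<longleftrightarrow> linear B \<and>
     (\<forall>x y. br (B x) (B y) = B (br (B x) y + br x (B y) + br x y))"

definition rb_lie_crossed_module ::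
  "('eh::real_vector \<Rightarrow> 'eh \<Rightarrow> 'eh) \<Rightarrow> ('eg::real_vector \<Rightarrow> 'eg \<Rightarrow> 'eg) \<Rightarrow> ('eh \<Rightarrow> 'eg) \<Rightarrow>
   ('eg \<Rightarrow> 'eh \<Rightarrow> 'eh) \<Rightarrow> ('eh \<Rightarrow> 'eh) \<Rightarrow> ('eg \<Rightarrow> 'eg) \<Rightarrow> bool" where
  "rb_lie_crossed_module brh brg dt \<phi> B1 B0 \<longleftrightarrow>
     rb_lie brh B1 \<and> rb_lie brg B0 \<and> dt \<circ> B1 = B0 \<circ> dt \<and>
     (\<forall>x u. \<phi> (B0 x) (B1 u) = B1 (\<phi> x (B1 u) + \<phi> (B0 x) u + \<phi> x u))"

end

theory Submission
  imports Defs
begin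

text \<open>A tangent vector at the identity is the velocity of a curve through it, and the bracket
  and the action \<open>\<phi>\<close> are mixed second derivatives of two-parameter families
  \<open>\<Phi>(g(s))(p(r))\<close>.  Velocities add under pointwise products and are mapped by differentials,
  so any identity between two such families, written out with chart curves \<open>a(s)\<close>, \<open>p(r)\<close>,
  can be differentiated in \<open>r\<close> and then in \<open>s\<close>.  Doing this with condition (iii) and expanding
  by bilinearity of \<open>\<phi>\<close> gives (iii) for the Lie algebras.  The Rota-Baxter identity on a Lie
  group implies (iii) for the conjugation action of the group on itself, so the same
  computation yields (i); (ii) is the chain rule.\<close>

lemma smooth_atlas_chartD:
  assumes "smooth_atlas A" "(U, c) \<in> A"
  shows "open U" "open (c ` U)" "continuous_on (c ` U) (inv_into U c)"
    "\<And>x. x \<in> U \<Longrightarrow> inv_into U c (c x) = x" "\<And>y. y \<in> c ` U \<Longrightarrow> c (inv_into U c y) = y"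
    "inj_on c U"
proof -
  have "is_chart (U, c)" using assms unfolding smooth_atlas_def by blast
  hence h: "open U" "open (c ` U)" "homeomorphism U (c ` U) c (inv_into U c)"
    unfolding is_chart_def by auto
  show "open U" "open (c ` U)" using h by auto
  show "continuous_on (c ` U) (inv_into U c)"
    "\<And>x. x \<in> U \<Longrightarrow> inv_into U c (c x) = x" "\<And>y. y \<in> c ` U \<Longrightarrow> c (inv_into U c y) = y"
    using h(3) unfolding homeomorphism_def by auto
  then show "inj_on c U" by (metis inj_on_inverseI)
qed

lemma smooth_on_differentiable:
  assumes "smooth_on S f" "x \<in> S" shows "f differentiable (at x)"
proof -
  have "Ck_on (Suc 0) S f" using assms(1) unfolding smooth_on_def by blast
  thus ?thesis using assms(2) by simp
qed

lemma smooth_on_differentiable_derivative: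
  assumes "smooth_on S f" "x \<in> S"
  shows "(\<lambda>z. frechet_derivative f (at z) v) differentiable (at x)"
proof -
  have "Ck_on (Suc (Suc 0)) S f" using assms(1) unfolding smooth_on_def by blast
  thus ?thesis using assms(2) by simp
qed

lemma smooth_on_imp_open: "smooth_on S f \<Longrightarrow> open S"
  unfolding smooth_on_def by blast

lemma smooth_mapD:
  assumes "smooth_map A A' f" "(U, c) \<in> A" "(V, d) \<in> A'"
  shows "smooth_on (c ` (U \<inter> f -` V)) (d \<circ> f \<circ> inv_into U c)"
  using assms unfolding smooth_map_def by blast

lemma smooth_map_isCont: "smooth_map A A' f \<Longrightarrow> isCont f x"
  unfolding smooth_map_def by (simp add: continuous_on_eq_continuous_at)

lemma linear_lie_diff:
  assumes "smooth_map A A' f" "(U, c) \<in> A" "(V, d) \<in> A'" "e \<in> U" "f e \<in> V"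
  shows "linear (lie_diff U c e f d)"
proof -
  have "(d \<circ> f \<circ> inv_into U c) differentiable (at (c e))"
    by (rule smooth_on_differentiable[OF smooth_mapD[OF assms(1-3)]]) (use assms(4,5) in auto)
  then show ?thesis unfolding lie_diff_def by (rule linear_frechet_derivative)
qed

definition chart_repr2 ::
  "'m set \<Rightarrow> ('m \<Rightarrow> 'e1) \<Rightarrow> 'n set \<Rightarrow> ('n \<Rightarrow> 'e2) \<Rightarrow> ('k \<Rightarrow> 'e3) \<Rightarrow> ('m \<times> 'n \<Rightarrow> 'k) \<Rightarrow> 'e1 \<times> 'e2 \<Rightarrow> 'e3"
  where "chart_repr2 U1 c1 U2 c2 c3 F = c3 \<circ> F \<circ> inv_into (U1 \<times> U2) (\<lambda>(x, y). (c1 x, c2 y))"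

lemma chart_repr2_apply:
  assumes "inj_on c1 U1" "inj_on c2 U2" "x \<in> U1" "y \<in> U2"
  shows "chart_repr2 U1 c1 U2 c2 c3 F (c1 x, c2 y) = c3 (F (x, y))"
proof -
  have "inj_on (\<lambda>(x, y). (c1 x, c2 y)) (U1 \<times> U2)"
    using assms(1,2) unfolding inj_on_def by auto
  from inv_into_f_f[OF this, of "(x, y)"] assms(3,4) show ?thesis
    unfolding chart_repr2_def by simp
qed

lemma smooth_on_chart_repr2:
  assumes "smooth_map (prod_atlas A1 A2) A3 F" "(U1, c1) \<in> A1" "(U2, c2) \<in> A2" "(U3, c3) \<in> A3"
  shows "smooth_on ((\<lambda>(x, y). (c1 x, c2 y)) ` ((U1 \<times> U2) \<inter> F -` U3)) (chart_repr2 U1 c1 U2 c2 c3 F)"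
proof -
  have "(U1 \<times> U2, \<lambda>(x, y). (c1 x, c2 y)) \<in> prod_atlas A1 A2"
    using assms(2,3) unfolding prod_atlas_def by blast
  from smooth_mapD[OF assms(1) this assms(4)] show ?thesis unfolding chart_repr2_def .
qed

lemma continuous_at_eventually_in_open:
  assumes "continuous (at x) p" "open U" "p x \<in> U"
  shows "\<forall>\<^sub>F r in nhds x. p r \<in> U"
proof -
  have "\<forall>\<^sub>F r in at x. p r \<in> U"
    using assms unfolding continuous_at by (simp add: tendsto_def)
  thus ?thesis using assms(3) by (simp add: eventually_nhds_conv_at)
qed

lemma has_vector_derivative_transform_nhds:
  assumes "(f has_vector_derivative v) (at x)" "\<forall>\<^sub>F y in nhds x. f y = g y"
  shows "(g has_vector_derivative v) (at x)"
proof -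
  have "g x = f x" using assms(2) by (simp add: eventually_nhds_conv_at)
  have "(f has_vector_derivative v) (at x within UNIV) = (g has_vector_derivative v) (at x within UNIV)"
    by (rule has_vector_derivative_cong_ev) (use assms(2) \<open>g x = f x\<close> in \<open>auto elim: eventually_mono\<close>)
  thus ?thesis using assms(1) by simp
qed

lemma has_vector_derivative_frechet_chain:
  assumes "(k has_vector_derivative v) (at x)" "f differentiable (at (k x))"
  shows "((\<lambda>y. f (k y)) has_vector_derivative (frechet_derivative f (at (k x)) v)) (at x)"
proof -
  have "(f has_derivative frechet_derivative f (at (k x))) (at (k x) within range k)"
    using assms(2) frechet_derivative_works has_derivative_at_withinI by blast
  from vector_derivative_diff_chain_within[OF assms(1) this] show ?thesis by (simp add: o_def)
qed

text \<open>Expanding \<open>\<tau> q\<close> in a basis, only the maps \<open>z \<mapsto> Df(z) w\<close> with \<open>w\<close> fixed need to be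
  differentiated.\<close>
lemma differentiable_frechet_derivative_along:
  fixes f :: "'a::euclidean_space \<Rightarrow> 'b::real_normed_vector"
    and \<sigma> :: "'c::real_normed_vector \<Rightarrow> 'a" and \<tau> :: "'c \<Rightarrow> 'a"
  assumes "\<sigma> differentiable (at p)" "\<tau> differentiable (at p)"
    "\<forall>\<^sub>F z in nhds (\<sigma> p). f differentiable (at z)"
    "\<And>w. (\<lambda>z. frechet_derivative f (at z) w) differentiable (at (\<sigma> p))"
  shows "(\<lambda>q. frechet_derivative f (at (\<sigma> q)) (\<tau> q)) differentiable (at p)"
proof -
  define E where "E q = (\<Sum>b\<in>Basis. (\<tau> q \<bullet> b) *\<^sub>R frechet_derivative f (at (\<sigma> q)) b)" for q
  have "E differentiable (at p)"
    unfolding E_def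
  proof (intro differentiable_sum ballI differentiable_scaleR)
    fix b :: 'a
    show "(\<lambda>q. \<tau> q \<bullet> b) differentiable (at p)"
      using assms(2) by (intro differentiable_inner) auto
    show "(\<lambda>q. frechet_derivative f (at (\<sigma> q)) b) differentiable (at p)"
      using differentiable_chain_at[OF assms(1) assms(4)[of b]] by (simp add: o_def)
  qed simp
  then obtain E' where E': "(E has_derivative E') (at p)" unfolding differentiable_def by blast
  have "isCont \<sigma> p" using assms(1) differentiable_imp_continuous_within by blast
  then have "\<forall>\<^sub>F q in at p. f differentiable (at (\<sigma> q))"
    using eventually_compose_filterlim[OF assms(3)] by (simp add: continuous_at)
  then have "\<forall>\<^sub>F q in nhds p. f differentiable (at (\<sigma> q))"
    using eventually_nhds_x_imp_x[OF assms(3)] by (simp add: eventually_nhds_conv_at)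
  then have "\<forall>\<^sub>F q in nhds p. E q = frechet_derivative f (at (\<sigma> q)) (\<tau> q)"
  proof (rule eventually_mono)
    fix q assume "f differentiable (at (\<sigma> q))"
    hence l: "linear (frechet_derivative f (at (\<sigma> q)))" by (rule linear_frechet_derivative)
    have "frechet_derivative f (at (\<sigma> q)) (\<tau> q) =
          frechet_derivative f (at (\<sigma> q)) (\<Sum>b\<in>Basis. (\<tau> q \<bullet> b) *\<^sub>R b)"
      by (simp add: euclidean_representation)
    also have "\<dots> = E q" unfolding E_def using l by (simp add: linear_sum linear.scaleR)
    finally show "E q = frechet_derivative f (at (\<sigma> q)) (\<tau> q)" by simp
  qed
  then have "((\<lambda>q. frechet_derivative f (at (\<sigma> q)) (\<tau> q)) has_derivative E') (at p)"
    using has_derivative_transform_eventually[of E E' p UNIV] E'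
    by (simp add: eventually_nhds_conv_at)
  thus ?thesis unfolding differentiable_def by blast
qed

section \<open>Velocities of curves and of two-parameter families\<close>

definition has_velocity ::
  "('m::topological_space \<Rightarrow> 'e::real_normed_vector) \<Rightarrow> 'm \<Rightarrow> (real \<Rightarrow> 'm) \<Rightarrow> 'e \<Rightarrow> bool" where
  "has_velocity c e p v \<longleftrightarrow>
     p 0 = e \<and> continuous (at 0) p \<and> ((\<lambda>r. c (p r)) has_vector_derivative v) (at 0)"

lemma has_velocity_unique: "has_velocity c e p v \<Longrightarrow> has_velocity c e p w \<Longrightarrow> v = w"
  unfolding has_velocity_def using vector_derivative_unique_at by blast

lemma has_velocity_const: "has_velocity c e (\<lambda>r. e) 0"
  unfolding has_velocity_def by (auto intro: has_vector_derivative_const)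

lemma has_velocity_chart_curve:
  assumes "smooth_atlas A" "(U, c) \<in> A" "e \<in> U"
  shows "has_velocity c e (chart_curve U c e v) v"
proof -
  note cf = smooth_atlas_chartD[OF assms(1,2)]
  have ceU: "c e \<in> c ` U" using assms(3) by blast
  have "continuous (at 0) (\<lambda>s. inv_into U c (c e + s *\<^sub>R v))"
  proof (rule continuous_at_compose[unfolded o_def])
    show "isCont (inv_into U c) (c e + 0 *\<^sub>R v)"
      using cf(2,3) ceU continuous_on_eq_continuous_at by fastforce
  qed (auto intro!: continuous_intros)
  moreover have "((\<lambda>r. c (chart_curve U c e v r)) has_vector_derivative v) (at 0)"
  proof (rule has_vector_derivative_transform_nhds)
    show "((\<lambda>r. c e + r *\<^sub>R v) has_vector_derivative v) (at 0)"
      by (auto intro!: derivative_eq_intros)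
    have "\<forall>\<^sub>F s in nhds 0. c e + s *\<^sub>R v \<in> c ` U"
      by (rule continuous_at_eventually_in_open) (use cf(2) ceU in \<open>auto intro!: continuous_intros\<close>)
    then show "\<forall>\<^sub>F y in nhds 0. c e + y *\<^sub>R v = c (chart_curve U c e v y)"
      by (rule eventually_mono) (simp add: chart_curve_def cf(5))
  qed
  ultimately show ?thesis
    unfolding has_velocity_def chart_curve_def using cf(4) assms(3) by simp
qed

lemma has_velocity_smooth_map:
  fixes f :: "'m::t2_space \<Rightarrow> 'n::t2_space" and c :: "'m \<Rightarrow> 'e::euclidean_space"
    and d :: "'n \<Rightarrow> 'f::euclidean_space"
  assumes "smooth_atlas A" "smooth_atlas A'" "smooth_map A A' f" "(U, c) \<in> A" "e \<in> U"
    "(V, d) \<in> A'" "f e \<in> V" "has_velocity c e p v"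
  shows "has_velocity d (f e) (\<lambda>r. f (p r)) (lie_diff U c e f d v)"
proof -
  note cf = smooth_atlas_chartD[OF assms(1,4)]
  note df = smooth_atlas_chartD[OF assms(2,6)]
  have p0: "p 0 = e" and pc: "continuous (at 0) p"
    and pd: "((\<lambda>r. c (p r)) has_vector_derivative v) (at 0)"
    using assms(8) unfolding has_velocity_def by auto
  have fpc: "continuous (at 0) (\<lambda>r. f (p r))"
    using continuous_at_compose[OF pc smooth_map_isCont[OF assms(3)]] by (simp add: o_def)
  have ev1: "\<forall>\<^sub>F r in nhds 0. p r \<in> U"
    by (rule continuous_at_eventually_in_open[OF pc cf(1)]) (simp add: p0 assms(5))
  have ev2: "\<forall>\<^sub>F r in nhds 0. f (p r) \<in> V"
    by (rule continuous_at_eventually_in_open[OF fpc df(1)]) (simp add: p0 assms(7))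
  let ?L = "d \<circ> f \<circ> inv_into U c"
  have "?L differentiable (at (c (p 0)))"
    by (rule smooth_on_differentiable[OF smooth_mapD[OF assms(3,4,6)]]) (use assms(5,7) p0 in auto)
  from has_vector_derivative_frechet_chain[OF pd this]
  have "((\<lambda>r. ?L (c (p r))) has_vector_derivative lie_diff U c e f d v) (at 0)"
    unfolding lie_diff_def p0 .
  then have "((\<lambda>r. d (f (p r))) has_vector_derivative lie_diff U c e f d v) (at 0)"
    by (rule has_vector_derivative_transform_nhds)
      (use eventually_conj[OF ev1 ev2] in \<open>auto elim!: eventually_mono simp: cf(4)\<close>)
  thus ?thesis unfolding has_velocity_def using p0 fpc by blast
qed

lemma has_velocity_smooth_map2:
  fixes F :: "'m::t2_space \<times> 'n::t2_space \<Rightarrow> 'k::t2_space" and c1 :: "'m \<Rightarrow> 'e1::euclidean_space"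
    and c2 :: "'n \<Rightarrow> 'e2::euclidean_space" and c3 :: "'k \<Rightarrow> 'e3::euclidean_space"
  assumes "smooth_atlas A1" "smooth_atlas A2" "smooth_atlas A3" "smooth_map (prod_atlas A1 A2) A3 F"
    "(U1, c1) \<in> A1" "(U2, c2) \<in> A2" "(U3, c3) \<in> A3" "e1 \<in> U1" "e2 \<in> U2" "F (e1, e2) \<in> U3"
    "has_velocity c1 e1 p u" "has_velocity c2 e2 q w"
  shows "has_velocity c3 (F (e1, e2)) (\<lambda>r. F (p r, q r))
           (frechet_derivative (chart_repr2 U1 c1 U2 c2 c3 F) (at (c1 e1, c2 e2)) (u, w))"
proof -
  note f1 = smooth_atlas_chartD[OF assms(1,5)]
  note f2 = smooth_atlas_chartD[OF assms(2,6)]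
  note f3 = smooth_atlas_chartD[OF assms(3,7)]
  have p0: "p 0 = e1" and pc: "continuous (at 0) p"
    and pd: "((\<lambda>r. c1 (p r)) has_vector_derivative u) (at 0)"
    using assms(11) unfolding has_velocity_def by auto
  have q0: "q 0 = e2" and qc: "continuous (at 0) q"
    and qd: "((\<lambda>r. c2 (q r)) has_vector_derivative w) (at 0)"
    using assms(12) unfolding has_velocity_def by auto
  have fpc: "continuous (at 0) (\<lambda>r. F (p r, q r))"
    using continuous_at_compose[OF continuous_Pair[OF pc qc] smooth_map_isCont[OF assms(4)]]
    by (simp add: o_def)
  have ev: "\<forall>\<^sub>F r in nhds 0. p r \<in> U1" "\<forall>\<^sub>F r in nhds 0. q r \<in> U2"
    by (rule continuous_at_eventually_in_open[OF pc f1(1)], simp add: p0 assms(8))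
      (rule continuous_at_eventually_in_open[OF qc f2(1)], simp add: q0 assms(9))
  let ?L = "chart_repr2 U1 c1 U2 c2 c3 F"
  have "?L differentiable (at (c1 (p 0), c2 (q 0)))"
    by (rule smooth_on_differentiable[OF smooth_on_chart_repr2[OF assms(4-7)]])
      (use assms(8-10) p0 q0 in force)
  from has_vector_derivative_frechet_chain[OF has_vector_derivative_Pair[OF pd qd], of ?L] this
  have "((\<lambda>r. ?L (c1 (p r), c2 (q r))) has_vector_derivative
      frechet_derivative ?L (at (c1 e1, c2 e2)) (u, w)) (at 0)"
    by (simp add: p0 q0)
  then have "((\<lambda>r. c3 (F (p r, q r))) has_vector_derivative
      frechet_derivative ?L (at (c1 e1, c2 e2)) (u, w)) (at 0)"
    by (rule has_vector_derivative_transform_nhds)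
      (use eventually_conj[OF ev] in \<open>auto elim!: eventually_mono simp: chart_repr2_apply f1(6) f2(6)\<close>)
  thus ?thesis unfolding has_velocity_def using p0 q0 fpc by blast
qed

definition has_mixed_velocity ::
  "('m::topological_space \<Rightarrow> 'e::real_normed_vector) \<Rightarrow> 'm \<Rightarrow> (real \<Rightarrow> real \<Rightarrow> 'm) \<Rightarrow> 'e \<Rightarrow> bool"
  where "has_mixed_velocity c e F z \<longleftrightarrow>
    (\<exists>V. (\<forall>\<^sub>F s in nhds 0. has_velocity c e (F s) (V s)) \<and> (V has_vector_derivative z) (at 0))"

lemma mixed2_eq_if_has_mixed_velocity:
  assumes "has_mixed_velocity c e F z"
  shows "mixed2 (\<lambda>s r. c (F s r)) = z"
proof -
  obtain V where V: "\<forall>\<^sub>F s in nhds 0. has_velocity c e (F s) (V s)"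
    and dV: "(V has_vector_derivative z) (at 0)"
    using assms unfolding has_mixed_velocity_def by blast
  have "\<forall>\<^sub>F s in nhds 0. V s = vector_derivative (\<lambda>r. c (F s r)) (at 0)"
    using V by (rule eventually_mono) (auto simp: has_velocity_def vector_derivative_at)
  from has_vector_derivative_transform_nhds[OF dV this] show ?thesis
    unfolding mixed2_def by (rule vector_derivative_at)
qed

lemma has_mixed_velocity_unique:
  "has_mixed_velocity c e F z \<Longrightarrow> has_mixed_velocity c e F z' \<Longrightarrow> z = z'"
  using mixed2_eq_if_has_mixed_velocity by metis

lemma has_mixed_velocity_const: "has_mixed_velocity c e (\<lambda>s r. e) 0"
  unfolding has_mixed_velocity_def
  by (rule exI[of _ "\<lambda>s. 0"]) (simp add: has_velocity_const)

lemma has_mixed_velocity_smooth_map: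
  fixes f :: "'m::t2_space \<Rightarrow> 'n::t2_space" and c :: "'m \<Rightarrow> 'e::euclidean_space"
    and d :: "'n \<Rightarrow> 'f::euclidean_space"
  assumes "smooth_atlas A" "smooth_atlas A'" "smooth_map A A' f" "(U, c) \<in> A" "e \<in> U"
    "(V, d) \<in> A'" "f e \<in> V" "has_mixed_velocity c e F z"
  shows "has_mixed_velocity d (f e) (\<lambda>s r. f (F s r)) (lie_diff U c e f d z)"
proof -
  obtain W where W: "\<forall>\<^sub>F s in nhds 0. has_velocity c e (F s) (W s)"
    and dW: "(W has_vector_derivative z) (at 0)"
    using assms(8) unfolding has_mixed_velocity_def by blast
  have "\<forall>\<^sub>F s in nhds 0. has_velocity d (f e) (\<lambda>r. f (F s r)) (lie_diff U c e f d (W s))"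
    using W by (rule eventually_mono) (rule has_velocity_smooth_map[OF assms(1-7)])
  moreover have "bounded_linear (lie_diff U c e f d)"
    using linear_lie_diff[OF assms(3,4,6,5,7)] linear_conv_bounded_linear by blast
  from bounded_linear.has_vector_derivative[OF this dW]
  have "((\<lambda>s. lie_diff U c e f d (W s)) has_vector_derivative lie_diff U c e f d z) (at 0)" .
  ultimately show ?thesis
    unfolding has_mixed_velocity_def by (intro exI[of _ "\<lambda>s. lie_diff U c e f d (W s)"]) blast
qed

definition linearizes ::
  "('g::topological_space \<Rightarrow> 'eg::real_normed_vector) \<Rightarrow> 'g \<Rightarrow>
   ('h::topological_space \<Rightarrow> 'eh::real_normed_vector) \<Rightarrow> 'h \<Rightarrow>
   ('g \<Rightarrow> 'h \<Rightarrow> 'h) \<Rightarrow> ('eg \<Rightarrow> 'eh \<Rightarrow> 'eh) \<Rightarrow> bool" where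
  "linearizes cG eG cH eH \<Phi> act \<longleftrightarrow>
     (\<forall>g x p u. has_velocity cG eG g x \<longrightarrow> has_velocity cH eH p u \<longrightarrow>
        has_mixed_velocity cH eH (\<lambda>s r. \<Phi> (g s) (p r)) (act x u))"

lemma lie_diff_intertwining:
  fixes t :: "'m::t2_space \<Rightarrow> 'n::t2_space" and c :: "'m \<Rightarrow> 'e::euclidean_space"
    and d :: "'n \<Rightarrow> 'f::euclidean_space"
  assumes "smooth_atlas A" "smooth_atlas A'" "(U, c) \<in> A" "e \<in> U" "(V, d) \<in> A'" "t e \<in> V"
    and "smooth_map A A' t" "smooth_map A A f" "smooth_map A' A' f'"
    and "f e = e" "f' (t e) = t e" "t \<circ> f = f' \<circ> t"
  shows "lie_diff U c e t d \<circ> lie_diff U c e f c =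
    lie_diff V d (t e) f' d \<circ> lie_diff U c e t d"
proof
  fix u
  have vp: "has_velocity c e (chart_curve U c e u) u"
    by (rule has_velocity_chart_curve[OF assms(1,3,4)])
  have "has_velocity d (t e) (\<lambda>r. t (f (chart_curve U c e u r)))
      (lie_diff U c e t d (lie_diff U c e f c u))"
    using has_velocity_smooth_map[OF assms(1,2,7,3,4,5,6)
        has_velocity_smooth_map[OF assms(1,1,8,3,4,3) _ vp, unfolded assms(10)]] assms(4) by simp
  moreover have "has_velocity d (t e) (\<lambda>r. f' (t (chart_curve U c e u r)))
      (lie_diff V d (t e) f' d (lie_diff U c e t d u))"
    using has_velocity_smooth_map[OF assms(2,2,9,5,6,5) _
        has_velocity_smooth_map[OF assms(1,2,7,3,4,5,6) vp]] assms(6,11)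
    by simp
  ultimately show "(lie_diff U c e t d \<circ> lie_diff U c e f c) u =
      (lie_diff V d (t e) f' d \<circ> lie_diff U c e t d) u"
    using fun_cong[OF assms(12)] has_velocity_unique by (fastforce simp: o_def)
qed

locale univ_group = group G for G (structure) +
  assumes carrier_UNIV: "carrier G = UNIV"
begin

lemma group_simps:
  "x \<otimes> (inv x \<otimes> y) = y" "inv x \<otimes> (x \<otimes> y) = y" "x \<otimes> inv x = \<one>" "inv x \<otimes> x = \<one>"
  "x \<otimes> \<one> = x" "\<one> \<otimes> x = x" "(x \<otimes> y) \<otimes> z = x \<otimes> (y \<otimes> z)"
  "inv (x \<otimes> y) = inv y \<otimes> inv x" "inv (inv x) = x" "inv \<one> = \<one>"
  by (simp_all add: carrier_UNIV m_assoc[symmetric] inv_mult_group)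

lemma idempotent_eq_one: "x \<otimes> x = x \<Longrightarrow> x = \<one>"
  using l_cancel_one[of x x] by (simp add: carrier_UNIV)

lemma multiplicative_one:
  assumes "\<And>x y. f (x \<otimes> y) = f x \<otimes> f y"
  shows "f \<one> = \<one>"
  using assms[of \<one> \<one>] by (intro idempotent_eq_one) (simp add: group_simps)

lemma rota_baxter_one:
  assumes "\<And>a b. B a \<otimes> B b = B (a \<otimes> B a \<otimes> b \<otimes> inv (B a))"
  shows "B \<one> = \<one>"
  using assms[of \<one> \<one>] by (intro idempotent_eq_one) (simp add: group_simps)

text \<open>The Rota-Baxter identity in the shape of condition (iii) for the conjugation action.\<close>
lemma rota_baxter_conj:
  assumes rb: "\<And>a b. B a \<otimes> B b = B (a \<otimes> B a \<otimes> b \<otimes> inv (B a))"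
  shows "B a \<otimes> B b \<otimes> inv (B a) =
    B ((a \<otimes> B a) \<otimes> (b \<otimes> B b) \<otimes> inv (a \<otimes> B a) \<otimes> (B a \<otimes> inv (B b) \<otimes> inv (B a)))"
proof -
  define X where "X = a \<otimes> B a \<otimes> b \<otimes> inv (B a)"
  \<comment> \<open>\<open>Y\<close> is chosen so that the Rota-Baxter identity gives \<open>B Y = inv (B a)\<close>.\<close>
  define Y where "Y = inv (B a) \<otimes> inv a \<otimes> B a"
  have BX: "B X = B a \<otimes> B b" unfolding X_def by (rule rb[symmetric])
  have "a \<otimes> B a \<otimes> Y \<otimes> inv (B a) = \<one>" unfolding Y_def by (simp add: group_simps)
  then have "B a \<otimes> B Y = \<one>" by (simp only: rb rota_baxter_one[of B, OF rb])
  then have BY: "inv (B a) = B Y"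
    by (intro inv_unique[OF group_simps(4)]) (simp_all add: carrier_UNIV)
  have "B X \<otimes> B Y = B (X \<otimes> B X \<otimes> Y \<otimes> inv (B X))" by (rule rb)
  then have "B a \<otimes> B b \<otimes> inv (B a) = B (X \<otimes> (B a \<otimes> B b) \<otimes> Y \<otimes> inv (B a \<otimes> B b))"
    by (simp only: BX BY)
  also have "X \<otimes> (B a \<otimes> B b) \<otimes> Y \<otimes> inv (B a \<otimes> B b) =
    (a \<otimes> B a) \<otimes> (b \<otimes> B b) \<otimes> inv (a \<otimes> B a) \<otimes> (B a \<otimes> inv (B b) \<otimes> inv (B a))"
    unfolding X_def Y_def by (simp add: group_simps)
  finally show ?thesis .
qed

end

locale lie_group_chart =
  fixes G :: "('g::{t2_space, second_countable_topology}) monoid" (structure)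
    and A :: "('g set \<times> ('g \<Rightarrow> 'e::euclidean_space)) set"
    and U :: "'g set" and c :: "'g \<Rightarrow> 'e"
  assumes lie_group: "lie_group G A" and chart: "(U, c) \<in> A" and one_in_chart: "\<one> \<in> U"
begin

sublocale univ_group G
  using lie_group unfolding lie_group_def univ_group_def univ_group_axioms_def by blast

lemma atlas: "smooth_atlas A"
  and mult_smooth: "smooth_map (prod_atlas A A) A (\<lambda>(x, y). x \<otimes> y)"
  and inv_smooth: "smooth_map A A (\<lambda>x. inv x)"
  using lie_group unfolding lie_group_def by auto

lemmas chartD = smooth_atlas_chartD[OF atlas chart]

definition mult_repr :: "'e \<times> 'e \<Rightarrow> 'e" where
  "mult_repr = chart_repr2 U c U c c (\<lambda>(x, y). x \<otimes> y)"

definition inv_repr :: "'e \<Rightarrow> 'e" where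
  "inv_repr = c \<circ> (\<lambda>x. inv x) \<circ> inv_into U c"

lemma mult_repr_smooth:
  "smooth_on ((\<lambda>(x, y). (c x, c y)) ` ((U \<times> U) \<inter> (\<lambda>(x, y). x \<otimes> y) -` U)) mult_repr"
  unfolding mult_repr_def by (rule smooth_on_chart_repr2[OF mult_smooth chart chart chart])

lemma mult_repr_domain:
  "x \<in> U \<Longrightarrow> y \<in> U \<Longrightarrow> x \<otimes> y \<in> U \<Longrightarrow>
     (c x, c y) \<in> (\<lambda>(x, y). (c x, c y)) ` ((U \<times> U) \<inter> (\<lambda>(x, y). x \<otimes> y) -` U)"
  by force

lemma inv_repr_smooth: "smooth_on (c ` (U \<inter> (\<lambda>x. inv x) -` U)) inv_repr"
  unfolding inv_repr_def by (rule smooth_mapD[OF inv_smooth chart chart])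

lemma inv_repr_apply: "x \<in> U \<Longrightarrow> inv_repr (c x) = c (inv x)"
  unfolding inv_repr_def using chartD(4) by simp

lemma has_velocity_chart_curve_one: "has_velocity c \<one> (chart_curve U c \<one> v) v"
  by (rule has_velocity_chart_curve[OF atlas chart one_in_chart])

lemma has_velocity_mult_at:
  assumes "x \<in> U" "y \<in> U" "x \<otimes> y \<in> U" "has_velocity c x p u" "has_velocity c y q w"
  shows "has_velocity c (x \<otimes> y) (\<lambda>r. p r \<otimes> q r) (frechet_derivative mult_repr (at (c x, c y)) (u, w))"
  using has_velocity_smooth_map2[OF atlas atlas atlas mult_smooth chart chart chart, of x y p u q w] assms
  unfolding mult_repr_def by simp

text \<open>The differential of the multiplication at \<open>(\<one>, \<one>)\<close> is addition: restricted to either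
  factor it is the identity, as one sees on the curves \<open>p r \<otimes> \<one>\<close> and \<open>\<one> \<otimes> p r\<close>.\<close>
lemma has_velocity_mult:
  assumes "has_velocity c \<one> p u" "has_velocity c \<one> q w"
  shows "has_velocity c \<one> (\<lambda>r. p r \<otimes> q r) (u + w)"
proof -
  let ?D = "frechet_derivative mult_repr (at (c \<one>, c \<one>))"
  have one: "\<one> \<otimes> \<one> \<in> U" using one_in_chart by (simp add: group_simps)
  note at_one = has_velocity_mult_at[OF one_in_chart one_in_chart one]
  have "mult_repr differentiable (at (c \<one>, c \<one>))"
    by (rule smooth_on_differentiable[OF mult_repr_smooth mult_repr_domain[OF one_in_chart one_in_chart one]])
  hence lin: "linear ?D" by (rule linear_frechet_derivative)
  have "?D (a, 0) = a" for a
    using at_one[OF has_velocity_chart_curve_one has_velocity_const]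
    by (intro has_velocity_unique[OF _ has_velocity_chart_curve_one]) (simp add: group_simps)
  moreover have "?D (0, a) = a" for a
    using at_one[OF has_velocity_const has_velocity_chart_curve_one]
    by (intro has_velocity_unique[OF _ has_velocity_chart_curve_one]) (simp add: group_simps)
  ultimately have "?D (u, w) = u + w"
    using linear_add[OF lin, of "(u, 0)" "(0, w)"] by simp
  with at_one[OF assms] show ?thesis by (simp add: group_simps)
qed

lemma has_velocity_inv:
  assumes "has_velocity c \<one> p v"
  shows "has_velocity c \<one> (\<lambda>r. inv (p r)) (- v)"
proof -
  let ?L = "lie_diff U c \<one> (\<lambda>x. inv x) c v"
  have inv_p: "has_velocity c \<one> (\<lambda>r. inv (p r)) ?L"
    using has_velocity_smooth_map[OF atlas atlas inv_smooth chart one_in_chart chart _ assms]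
      one_in_chart by (simp add: group_simps)
  have "has_velocity c \<one> (\<lambda>r. \<one>) (v + ?L)"
    using has_velocity_mult[OF assms inv_p] by (simp add: group_simps)
  hence "v + ?L = 0" using has_velocity_const has_velocity_unique by blast
  hence "?L = - v" by (simp add: eq_neg_iff_add_eq_0 add.commute)
  thus ?thesis using inv_p by simp
qed

lemma has_mixed_velocity_mult:
  assumes "has_mixed_velocity c \<one> F z" "has_mixed_velocity c \<one> F' z'"
  shows "has_mixed_velocity c \<one> (\<lambda>s r. F s r \<otimes> F' s r) (z + z')"
proof -
  obtain V where V: "\<forall>\<^sub>F s in nhds 0. has_velocity c \<one> (F s) (V s)"
    and dV: "(V has_vector_derivative z) (at 0)"
    using assms(1) unfolding has_mixed_velocity_def by blast
  obtain V' where V': "\<forall>\<^sub>F s in nhds 0. has_velocity c \<one> (F' s) (V' s)"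
    and dV': "(V' has_vector_derivative z') (at 0)"
    using assms(2) unfolding has_mixed_velocity_def by blast
  have "\<forall>\<^sub>F s in nhds 0. has_velocity c \<one> (\<lambda>r. F s r \<otimes> F' s r) (V s + V' s)"
    using eventually_conj[OF V V'] by (rule eventually_mono) (auto intro: has_velocity_mult)
  with has_vector_derivative_add[OF dV dV'] show ?thesis
    unfolding has_mixed_velocity_def by (intro exI[of _ "\<lambda>s. V s + V' s"]) blast
qed

lemma rb_groupD:
  assumes "rb_group G A B"
  shows "smooth_map A A B" "B a \<otimes> B b = B (a \<otimes> B a \<otimes> b \<otimes> inv (B a))" "B \<one> = \<one>"
proof -
  show "smooth_map A A B" using assms unfolding rb_group_def by blast
  show rb: "B a \<otimes> B b = B (a \<otimes> B a \<otimes> b \<otimes> inv (B a))" for a b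
    using assms unfolding rb_group_def by blast
  show "B \<one> = \<one>" by (rule rota_baxter_one[of B, OF rb])
qed

lemma has_velocity_rota_baxter:
  assumes "rb_group G A B" "has_velocity c \<one> p v"
  shows "has_velocity c \<one> (\<lambda>r. B (p r)) (lie_diff U c \<one> B c v)"
  using has_velocity_smooth_map[OF atlas atlas rb_groupD(1)[OF assms(1)] chart one_in_chart chart _ assms(2)]
  by (simp add: rb_groupD(3)[OF assms(1)] one_in_chart)

lemma has_mixed_velocity_rota_baxter:
  assumes "rb_group G A B" "has_mixed_velocity c \<one> F z"
  shows "has_mixed_velocity c \<one> (\<lambda>s r. B (F s r)) (lie_diff U c \<one> B c z)"
  using has_mixed_velocity_smooth_map[OF atlas atlas rb_groupD(1)[OF assms(1)] chart one_in_chart chart _ assms(2)]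
  by (simp add: rb_groupD(3)[OF assms(1)] one_in_chart)

lemma linear_lie_diff_rota_baxter:
  assumes "rb_group G A B"
  shows "linear (lie_diff U c \<one> B c)"
  using linear_lie_diff[OF rb_groupD(1)[OF assms] chart chart one_in_chart]
  by (simp add: rb_groupD(3)[OF assms] one_in_chart)

end

section \<open>Linearized actions\<close>

locale linearized_action =
  src: lie_group_chart G AG UG cG + tgt: lie_group_chart H AH UH cH
  for G :: "('g::{t2_space, second_countable_topology}) monoid"
    and AG :: "('g set \<times> ('g \<Rightarrow> 'eg::euclidean_space)) set" and UG cG
    and H :: "('h::{t2_space, second_countable_topology}) monoid"
    and AH :: "('h set \<times> ('h \<Rightarrow> 'eh::euclidean_space)) set" and UH cH +
  fixes \<Phi> :: "'g \<Rightarrow> 'h \<Rightarrow> 'h" and act :: "'eg \<Rightarrow> 'eh \<Rightarrow> 'eh"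
  assumes action_mult: "\<Phi> a (p \<otimes>\<^bsub>H\<^esub> q) = \<Phi> a p \<otimes>\<^bsub>H\<^esub> \<Phi> a q"
    and linearizes: "linearizes cG \<one>\<^bsub>G\<^esub> cH \<one>\<^bsub>H\<^esub> \<Phi> act"
    and act_add_left: "act (x + y) u = act x u + act y u"
begin

lemma has_mixed_velocity_action:
  "has_velocity cG \<one>\<^bsub>G\<^esub> g x \<Longrightarrow> has_velocity cH \<one>\<^bsub>H\<^esub> p u \<Longrightarrow>
     has_mixed_velocity cH \<one>\<^bsub>H\<^esub> (\<lambda>s r. \<Phi> (g s) (p r)) (act x u)"
  using linearizes unfolding linearizes_def by blast

lemma lie_action_eq: "lie_action G UG cG H UH cH \<Phi> = act"
  unfolding lie_action_def
  by (intro ext mixed2_eq_if_has_mixed_velocity[of cH "\<one>\<^bsub>H\<^esub>"] has_mixed_velocity_action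
      src.has_velocity_chart_curve_one tgt.has_velocity_chart_curve_one)

lemma act_add_right: "act x (u + w) = act x u + act x w"
proof -
  let ?g = "chart_curve UG cG \<one>\<^bsub>G\<^esub> x"
    and ?p = "chart_curve UH cH \<one>\<^bsub>H\<^esub> u" and ?q = "chart_curve UH cH \<one>\<^bsub>H\<^esub> w"
  note vg = src.has_velocity_chart_curve_one[of x]
  note vp = tgt.has_velocity_chart_curve_one[of u] and vq = tgt.has_velocity_chart_curve_one[of w]
  have "has_mixed_velocity cH \<one>\<^bsub>H\<^esub> (\<lambda>s r. \<Phi> (?g s) (?p r \<otimes>\<^bsub>H\<^esub> ?q r)) (act x (u + w))"
    by (rule has_mixed_velocity_action[OF vg tgt.has_velocity_mult[OF vp vq]])
  moreover have "has_mixed_velocity cH \<one>\<^bsub>H\<^esub> (\<lambda>s r. \<Phi> (?g s) (?p r) \<otimes>\<^bsub>H\<^esub> \<Phi> (?g s) (?q r))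
      (act x u + act x w)"
    by (rule tgt.has_mixed_velocity_mult[OF has_mixed_velocity_action[OF vg vp]
          has_mixed_velocity_action[OF vg vq]])
  ultimately show ?thesis by (simp add: action_mult has_mixed_velocity_unique)
qed

lemma act_zero_right: "act x 0 = 0"
proof -
  have "has_mixed_velocity cH \<one>\<^bsub>H\<^esub> (\<lambda>s r. \<Phi> (chart_curve UG cG \<one>\<^bsub>G\<^esub> x s) \<one>\<^bsub>H\<^esub>) (act x 0)"
    by (rule has_mixed_velocity_action[OF src.has_velocity_chart_curve_one has_velocity_const])
  moreover have "\<Phi> a \<one>\<^bsub>H\<^esub> = \<one>\<^bsub>H\<^esub>" for a by (rule tgt.multiplicative_one) (rule action_mult)
  ultimately have "has_mixed_velocity cH \<one>\<^bsub>H\<^esub> (\<lambda>s r. \<one>\<^bsub>H\<^esub>) (act x 0)" by simp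
  then show ?thesis by (rule has_mixed_velocity_unique[OF _ has_mixed_velocity_const])
qed

lemma act_minus_right: "act x (- u) = - act x u"
  using act_add_right[of x u "- u"] act_zero_right[of x] by (simp add: eq_neg_iff_add_eq_0 add.commute)

text \<open>Along chart curves \<open>a(s)\<close>, \<open>b(r)\<close>, the right-hand side of \<open>rb\<close> is \<open>B1\<close> applied to the
  product of the families \<open>\<Phi>(a B0 a)(b B1 b)\<close> and \<open>\<Phi>(B0 a)(B1 b)\<^sup>-\<^sup>1\<close>, whose mixed velocities
  are values of \<open>act\<close>; bilinearity of \<open>act\<close> then rearranges the result.\<close>
lemma rota_baxter_linearization:
  assumes rb1: "rb_group H AH B1" and rb0: "rb_group G AG B0"
    and rb: "\<And>a p. \<Phi> (B0 a) (B1 p) =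
      B1 (\<Phi> (a \<otimes>\<^bsub>G\<^esub> B0 a) (p \<otimes>\<^bsub>H\<^esub> B1 p) \<otimes>\<^bsub>H\<^esub> \<Phi> (B0 a) (inv\<^bsub>H\<^esub> (B1 p)))"
  defines "D1 \<equiv> lie_diff UH cH \<one>\<^bsub>H\<^esub> B1 cH" and "D0 \<equiv> lie_diff UG cG \<one>\<^bsub>G\<^esub> B0 cG"
  shows "act (D0 x) (D1 u) = D1 (act x (D1 u) + act (D0 x) u + act x u)"
proof -
  let ?a = "chart_curve UG cG \<one>\<^bsub>G\<^esub> x" and ?b = "chart_curve UH cH \<one>\<^bsub>H\<^esub> u"
  note va = src.has_velocity_chart_curve_one[of x] and vb = tgt.has_velocity_chart_curve_one[of u]
  note vBa = src.has_velocity_rota_baxter[OF rb0 va, folded D0_def]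
  note vBb = tgt.has_velocity_rota_baxter[OF rb1 vb, folded D1_def]
  have "has_mixed_velocity cH \<one>\<^bsub>H\<^esub> (\<lambda>s r. B1 (\<Phi> (?a s \<otimes>\<^bsub>G\<^esub> B0 (?a s)) (?b r \<otimes>\<^bsub>H\<^esub> B1 (?b r)) \<otimes>\<^bsub>H\<^esub>
        \<Phi> (B0 (?a s)) (inv\<^bsub>H\<^esub> (B1 (?b r)))))
      (D1 (act (x + D0 x) (u + D1 u) + act (D0 x) (- D1 u)))"
    by (intro tgt.has_mixed_velocity_rota_baxter[OF rb1, folded D1_def] tgt.has_mixed_velocity_mult
        has_mixed_velocity_action src.has_velocity_mult tgt.has_velocity_mult tgt.has_velocity_inv
        va vb vBa vBb)
  then have "has_mixed_velocity cH \<one>\<^bsub>H\<^esub> (\<lambda>s r. \<Phi> (B0 (?a s)) (B1 (?b r)))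
      (D1 (act (x + D0 x) (u + D1 u) + act (D0 x) (- D1 u)))"
    by (simp only: rb)
  then have "act (D0 x) (D1 u) = D1 (act (x + D0 x) (u + D1 u) + act (D0 x) (- D1 u))"
    using has_mixed_velocity_action[OF vBa vBb] has_mixed_velocity_unique by blast
  also have "act (x + D0 x) (u + D1 u) + act (D0 x) (- D1 u) = act x (D1 u) + act (D0 x) u + act x u"
    by (simp add: act_add_left act_add_right act_minus_right algebra_simps)
  finally show ?thesis .
qed

end

section \<open>The conjugation action\<close>

context lie_group_chart
begin

text \<open>\<open>Ad_repr (c g)\<close> is the differential at \<open>\<one>\<close> of \<open>x \<mapsto> g \<otimes> x \<otimes> inv g\<close>, computed in the chart as
  the differential of right multiplication by \<open>inv g\<close> after that of left multiplication by \<open>g\<close>.\<close>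
definition Ad_repr :: "'e \<Rightarrow> 'e \<Rightarrow> 'e" where
  "Ad_repr k v = frechet_derivative mult_repr (at (k, inv_repr k))
     (frechet_derivative mult_repr (at (k, c \<one>)) (0, v), 0)"

definition ad :: "'e \<Rightarrow> 'e \<Rightarrow> 'e" where
  "ad x y = frechet_derivative (\<lambda>k. Ad_repr k y) (at (c \<one>)) x"

lemma has_velocity_conj:
  assumes "g \<in> U" "inv g \<in> U" "has_velocity c \<one> p v"
  shows "has_velocity c \<one> (\<lambda>r. g \<otimes> p r \<otimes> inv g) (Ad_repr (c g) v)"
proof -
  have "has_velocity c g (\<lambda>r. g \<otimes> p r) (frechet_derivative mult_repr (at (c g, c \<one>)) (0, v))"
    using has_velocity_mult_at[OF assms(1) one_in_chart _ has_velocity_const assms(3)] assms(1)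
    by (simp add: group_simps)
  from has_velocity_mult_at[OF assms(1,2) _ this has_velocity_const] show ?thesis
    unfolding Ad_repr_def using inv_repr_apply[OF assms(1)] one_in_chart by (simp add: group_simps)
qed

lemma Ad_repr_differentiable: "(\<lambda>k. Ad_repr k v) differentiable (at (c \<one>))"
proof -
  have one: "\<one> \<otimes> \<one> \<in> U" using one_in_chart by (simp add: group_simps)
  note domain = mult_repr_domain[OF one_in_chart one_in_chart one]
  have inv_one: "inv_repr (c \<one>) = c \<one>" using inv_repr_apply[OF one_in_chart] by (simp add: group_simps)
  have "inv_repr differentiable (at (c \<one>))"
    by (rule smooth_on_differentiable[OF inv_repr_smooth]) (use one_in_chart in \<open>auto simp: group_simps\<close>)
  then have "(\<lambda>k. (k, inv_repr k)) differentiable (at (c \<one>))"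
    by (intro differentiable_Pair) auto
  moreover have "(\<lambda>k. (frechet_derivative mult_repr (at (k, c \<one>)) (0, v), 0)) differentiable (at (c \<one>))"
    using differentiable_chain_at[of "\<lambda>k. (k, c \<one>)" "c \<one>",
        OF _ smooth_on_differentiable_derivative[OF mult_repr_smooth domain]]
    by (intro differentiable_Pair) (auto simp: o_def)
  moreover have "\<forall>\<^sub>F z in nhds (c \<one>, inv_repr (c \<one>)). mult_repr differentiable (at z)"
    using smooth_on_imp_open[OF mult_repr_smooth] domain smooth_on_differentiable[OF mult_repr_smooth]
    unfolding eventually_nhds inv_one by blast
  moreover have "(\<lambda>z. frechet_derivative mult_repr (at z) w) differentiable (at (c \<one>, inv_repr (c \<one>)))" for w
    unfolding inv_one by (rule smooth_on_differentiable_derivative[OF mult_repr_smooth domain])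
  ultimately show ?thesis
    unfolding Ad_repr_def by (rule differentiable_frechet_derivative_along)
qed

lemma linearizes_conj: "linearizes c \<one> c \<one> (\<lambda>a p. a \<otimes> p \<otimes> inv a) ad"
  unfolding linearizes_def has_mixed_velocity_def
proof (intro allI impI exI conjI)
  fix g x p u
  assume vg: "has_velocity c \<one> g x" and vp: "has_velocity c \<one> p u"
  have g0: "g 0 = \<one>" and gc: "continuous (at 0) g"
    and gd: "((\<lambda>s. c (g s)) has_vector_derivative x) (at 0)"
    using vg unfolding has_velocity_def by auto
  have "continuous (at 0) (\<lambda>s. inv (g s))"
    using continuous_at_compose[OF gc smooth_map_isCont[OF inv_smooth]] by (simp add: o_def)
  then have "\<forall>\<^sub>F s in nhds 0. inv (g s) \<in> U"
    by (rule continuous_at_eventually_in_open[OF _ chartD(1)]) (simp add: g0 group_simps one_in_chart)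
  moreover have "\<forall>\<^sub>F s in nhds 0. g s \<in> U"
    by (rule continuous_at_eventually_in_open[OF gc chartD(1)]) (simp add: g0 one_in_chart)
  ultimately show "\<forall>\<^sub>F s in nhds 0. has_velocity c \<one> (\<lambda>r. g s \<otimes> p r \<otimes> inv (g s)) (Ad_repr (c (g s)) u)"
    by (rule eventually_mono[OF eventually_conj]) (auto intro: has_velocity_conj[OF _ _ vp])
  from has_vector_derivative_frechet_chain[OF gd, of "\<lambda>k. Ad_repr k u"] Ad_repr_differentiable
  show "((\<lambda>s. Ad_repr (c (g s)) u) has_vector_derivative ad x u) (at 0)"
    unfolding ad_def by (simp add: g0)
qed

lemma ad_add_left: "ad (x + y) u = ad x u + ad y u"
  unfolding ad_def using linear_add[OF linear_frechet_derivative[OF Ad_repr_differentiable]] .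

lemma linearized_action_conj: "linearized_action G A U c G A U c (\<lambda>a p. a \<otimes> p \<otimes> inv a) ad"
proof unfold_locales
  show "a \<otimes> (p \<otimes> q) \<otimes> inv a = (a \<otimes> p \<otimes> inv a) \<otimes> (a \<otimes> q \<otimes> inv a)" for a p q
    by (simp add: group_simps)
qed (fact linearizes_conj ad_add_left)+

lemma lie_bracket_eq_lie_action: "lie_bracket G U c = lie_action G U c G U c (\<lambda>a p. a \<otimes> p \<otimes> inv a)"
  unfolding lie_bracket_def lie_action_def ..

theorem rb_lie_lie_diff:
  assumes "rb_group G A B"
  shows "rb_lie (lie_bracket G U c) (lie_diff U c \<one> B c)"
proof -
  interpret conj: linearized_action G A U c G A U c "\<lambda>a p. a \<otimes> p \<otimes> inv a" ad
    by (rule linearized_action_conj)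
  have "ad (lie_diff U c \<one> B c x) (lie_diff U c \<one> B c y) = lie_diff U c \<one> B c
      (ad (lie_diff U c \<one> B c x) y + ad x (lie_diff U c \<one> B c y) + ad x y)" for x y
    using conj.rota_baxter_linearization[OF assms assms] rota_baxter_conj[of B, OF rb_groupD(2)[OF assms]]
    by (simp add: ac_simps)
  then show ?thesis
    unfolding rb_lie_def lie_bracket_eq_lie_action conj.lie_action_eq
    using linear_lie_diff_rota_baxter[OF assms] by blast
qed

end

section \<open>Crossed modules\<close>

locale crossed_module_charts =
  fixes H :: "('h::{t2_space, second_countable_topology}) monoid"
    and AH :: "('h set \<times> ('h \<Rightarrow> 'eh::euclidean_space)) set"
    and G :: "('g::{t2_space, second_countable_topology}) monoid"
    and AG :: "('g set \<times> ('g \<Rightarrow> 'eg::euclidean_space)) set"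
    and t :: "'h \<Rightarrow> 'g" and \<Phi> :: "'g \<Rightarrow> 'h \<Rightarrow> 'h"
    and UH cH UG cG
  assumes crossed_module: "crossed_module H AH G AG t \<Phi>"
    and chart_H: "(UH, cH) \<in> AH" and one_in_chart_H: "\<one>\<^bsub>H\<^esub> \<in> UH"
    and chart_G: "(UG, cG) \<in> AG" and one_in_chart_G: "\<one>\<^bsub>G\<^esub> \<in> UG"
begin

sublocale H: lie_group_chart H AH UH cH
  using crossed_module chart_H one_in_chart_H
  unfolding crossed_module_def lie_group_chart_def by blast

sublocale G: lie_group_chart G AG UG cG
  using crossed_module chart_G one_in_chart_G
  unfolding crossed_module_def lie_group_chart_def by blast

lemma t_smooth: "smooth_map AH AG t"
  and action_smooth: "smooth_map (prod_atlas AG AH) AH (\<lambda>(a, p). \<Phi> a p)"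
  using crossed_module unfolding crossed_module_def by auto

lemma action_mult: "\<Phi> a (p \<otimes>\<^bsub>H\<^esub> q) = \<Phi> a p \<otimes>\<^bsub>H\<^esub> \<Phi> a q"
  using crossed_module unfolding crossed_module_def iso_def hom_def by (auto simp: H.carrier_UNIV)

lemma t_one: "t \<one>\<^bsub>H\<^esub> = \<one>\<^bsub>G\<^esub>"
proof -
  have "t \<in> hom H G" using crossed_module unfolding crossed_module_def by blast
  then have "t \<one>\<^bsub>H\<^esub> \<otimes>\<^bsub>G\<^esub> t \<one>\<^bsub>H\<^esub> = t \<one>\<^bsub>H\<^esub>"
    unfolding hom_def by (auto simp: H.carrier_UNIV H.group_simps dest: spec[of _ "\<one>\<^bsub>H\<^esub>"])
  then show ?thesis by (rule G.idempotent_eq_one)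
qed

definition action_repr :: "'eg \<times> 'eh \<Rightarrow> 'eh" where
  "action_repr = chart_repr2 UG cG UH cH cH (\<lambda>(a, p). \<Phi> a p)"

definition action_diff :: "'eg \<Rightarrow> 'eh \<Rightarrow> 'eh" where
  "action_diff x u = frechet_derivative (\<lambda>z. frechet_derivative action_repr (at z) (0, u))
     (at (cG \<one>\<^bsub>G\<^esub>, cH \<one>\<^bsub>H\<^esub>)) (x, 0)"

lemma action_one: "\<Phi> a \<one>\<^bsub>H\<^esub> = \<one>\<^bsub>H\<^esub>"
  by (rule H.multiplicative_one) (rule action_mult)

lemma action_repr_smooth:
  "smooth_on ((\<lambda>(x, y). (cG x, cH y)) ` ((UG \<times> UH) \<inter> (\<lambda>(a, p). \<Phi> a p) -` UH)) action_repr"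
  unfolding action_repr_def by (rule smooth_on_chart_repr2[OF action_smooth chart_G chart_H chart_H])

lemma action_repr_domain:
  "(cG \<one>\<^bsub>G\<^esub>, cH \<one>\<^bsub>H\<^esub>) \<in> (\<lambda>(x, y). (cG x, cH y)) ` ((UG \<times> UH) \<inter> (\<lambda>(a, p). \<Phi> a p) -` UH)"
  using one_in_chart_G one_in_chart_H by (force simp: action_one)

lemma linearizes_action: "linearizes cG \<one>\<^bsub>G\<^esub> cH \<one>\<^bsub>H\<^esub> \<Phi> action_diff"
  unfolding linearizes_def has_mixed_velocity_def
proof (intro allI impI exI conjI)
  fix g x p u
  assume vg: "has_velocity cG \<one>\<^bsub>G\<^esub> g x" and vp: "has_velocity cH \<one>\<^bsub>H\<^esub> p u"
  have g0: "g 0 = \<one>\<^bsub>G\<^esub>" and gc: "continuous (at 0) g"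
    and gd: "((\<lambda>s. cG (g s)) has_vector_derivative x) (at 0)"
    using vg unfolding has_velocity_def by auto
  have "\<forall>\<^sub>F s in nhds 0. g s \<in> UG"
    by (rule continuous_at_eventually_in_open[OF gc G.chartD(1)]) (simp add: g0 one_in_chart_G)
  then show "\<forall>\<^sub>F s in nhds 0. has_velocity cH \<one>\<^bsub>H\<^esub> (\<lambda>r. \<Phi> (g s) (p r))
      (frechet_derivative action_repr (at (cG (g s), cH \<one>\<^bsub>H\<^esub>)) (0, u))"
  proof (rule eventually_mono)
    fix s assume "g s \<in> UG"
    from has_velocity_smooth_map2[OF G.atlas H.atlas H.atlas action_smooth chart_G chart_H chart_H
        this one_in_chart_H _ has_velocity_const vp]
    show "has_velocity cH \<one>\<^bsub>H\<^esub> (\<lambda>r. \<Phi> (g s) (p r))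
        (frechet_derivative action_repr (at (cG (g s), cH \<one>\<^bsub>H\<^esub>)) (0, u))"
      unfolding action_repr_def by (simp add: action_one one_in_chart_H)
  qed
  have "((\<lambda>s. (cG (g s), cH \<one>\<^bsub>H\<^esub>)) has_vector_derivative (x, 0)) (at 0)"
    using gd by (intro has_vector_derivative_Pair) (auto intro: has_vector_derivative_const)
  from has_vector_derivative_frechet_chain[OF this, of "\<lambda>z. frechet_derivative action_repr (at z) (0, u)"]
    smooth_on_differentiable_derivative[OF action_repr_smooth action_repr_domain]
  show "((\<lambda>s. frechet_derivative action_repr (at (cG (g s), cH \<one>\<^bsub>H\<^esub>)) (0, u))
      has_vector_derivative action_diff x u) (at 0)"
    unfolding action_diff_def by (simp add: g0)
qed

lemma action_diff_add_left: "action_diff (x + y) u = action_diff x u + action_diff y u"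
proof -
  have "linear (frechet_derivative (\<lambda>z. frechet_derivative action_repr (at z) (0, u))
      (at (cG \<one>\<^bsub>G\<^esub>, cH \<one>\<^bsub>H\<^esub>)))"
    by (intro linear_frechet_derivative smooth_on_differentiable_derivative[OF action_repr_smooth
          action_repr_domain])
  from linear_add[OF this, of "(x, 0)" "(y, 0)"] show ?thesis unfolding action_diff_def by simp
qed

sublocale linearized_action G AG UG cG H AH UH cH \<Phi> action_diff
  by unfold_locales (fact action_mult linearizes_action action_diff_add_left)+

end

theorem theorem5p3:
  fixes H :: "('h::{t2_space, second_countable_topology}) monoid"
    and AH :: "('h set \<times> ('h \<Rightarrow> 'eh::euclidean_space)) set"
    and G :: "('g::{t2_space, second_countable_topology}) monoid"
    and AG :: "('g set \<times> ('g \<Rightarrow> 'eg::euclidean_space)) set"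
    and t :: "'h \<Rightarrow> 'g" and \<Phi> :: "'g \<Rightarrow> 'h \<Rightarrow> 'h"
    and \<B>1 :: "'h \<Rightarrow> 'h" and \<B>0 :: "'g \<Rightarrow> 'g"
  assumes "crossed_module H AH G AG t \<Phi>"
    and "rb_crossed_module H AH G AG t \<Phi> \<B>1 \<B>0"
    and "(UH, cH) \<in> AH" and "\<one>\<^bsub>H\<^esub> \<in> UH"
    and "(UG, cG) \<in> AG" and "\<one>\<^bsub>G\<^esub> \<in> UG"
  shows "rb_lie_crossed_module
           (lie_bracket H UH cH) (lie_bracket G UG cG)
           (lie_diff UH cH \<one>\<^bsub>H\<^esub> t cG)
           (lie_action G UG cG H UH cH \<Phi>)
           (lie_diff UH cH \<one>\<^bsub>H\<^esub> \<B>1 cH)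
           (lie_diff UG cG \<one>\<^bsub>G\<^esub> \<B>0 cG)"
proof -
  interpret crossed_module_charts H AH G AG t \<Phi> UH cH UG cG
    using assms(1,3-6) by unfold_locales
  have rb1: "rb_group H AH \<B>1" and rb0: "rb_group G AG \<B>0" and "t \<circ> \<B>1 = \<B>0 \<circ> t"
    and rb: "\<And>a p. \<Phi> (\<B>0 a) (\<B>1 p) =
      \<B>1 (\<Phi> (a \<otimes>\<^bsub>G\<^esub> \<B>0 a) (p \<otimes>\<^bsub>H\<^esub> \<B>1 p) \<otimes>\<^bsub>H\<^esub> \<Phi> (\<B>0 a) (inv\<^bsub>H\<^esub> (\<B>1 p)))"
    using assms(2) unfolding rb_crossed_module_def by auto
  have t_diff: "lie_diff UH cH \<one>\<^bsub>H\<^esub> t cG \<circ> lie_diff UH cH \<one>\<^bsub>H\<^esub> \<B>1 cH =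
      lie_diff UG cG \<one>\<^bsub>G\<^esub> \<B>0 cG \<circ> lie_diff UH cH \<one>\<^bsub>H\<^esub> t cG"
    using lie_diff_intertwining[OF H.atlas G.atlas chart_H one_in_chart_H chart_G _ t_smooth
        H.rb_groupD(1)[OF rb1] G.rb_groupD(1)[OF rb0] _ _ \<open>t \<circ> \<B>1 = \<B>0 \<circ> t\<close>]
    by (simp add: t_one one_in_chart_G H.rb_groupD(3)[OF rb1] G.rb_groupD(3)[OF rb0])
  show ?thesis
    unfolding rb_lie_crossed_module_def lie_action_eq
    by (intro conjI allI H.rb_lie_lie_diff[OF rb1] G.rb_lie_lie_diff[OF rb0] t_diff
        rota_baxter_linearization[where ?B1.0 = \<B>1 and ?B0.0 = \<B>0, OF rb1 rb0 rb])
qed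

end
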